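(* For every integer $n>1$, more than half of the matrices in $(\mathbb F_2)^{n\times n}$ have a $1$-dimensional null space.
   Context: $(\mathbb F_2)^{n\times n}$ is the set of all $n\times n$ matrices over $\mathbb F_2$. *)

theory Defs
  imports "HOL-Analysis.Analysis" "HOL-Library.Z2"
begin

instance bit :: finite
proof
  have "(UNIV :: bit set) = {0, 1}"
    by auto
  then show "finite (UNIV :: bit set)" by (metis finite.emptyI finite.insertI)
qed

definition null_space :: "'a::field ^ 'n ^ 'm \<Rightarrow> ('a ^ 'n) set" where
  "null_space A = {x. A *v x = 0}"

definition nullity :: "'a::field ^ 'n ^ 'm \<Rightarrow> nat" where
  "nullity A = vec.dim (null_space A)"

end

theory Submission
  imports Defs
begin

text \<open>
  Let \<open>k(A)\<close> be the number of nonzero vectors in the null space of \<open>A\<close>. For \<open>k \<noteq> 2\<close>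
  one has \<open>[k = 1] \<ge> k - k(k - 1)/2\<close>, and over \<open>F\<^sub>2\<close> the value \<open>k = 2\<close> never occurs
  because the null space is closed under addition. Averaging over all matrices: a fixed nonzero
  vector is killed by a \<open>1/N\<close> fraction of them (\<open>N = 2\<^sup>n\<close>), and two distinct nonzero
  vectors, being independent over \<open>F\<^sub>2\<close>, by a \<open>1/N\<^sup>2\<close> fraction. So the proportion of
  matrices with \<open>k = 1\<close>, i.e. of nullity 1, is at least
  \<open>(N - 1)/N - (N - 1)(N - 2)/(2N\<^sup>2) = (N - 1)(N + 2)/(2N\<^sup>2)\<close>, which exceeds \<open>1/2\<close> when \<open>N > 2\<close>.
\<close>

lemma card_UNIV_eq_mult_card_kernel:
  fixes f :: "'a::{finite,ab_group_add} \<Rightarrow> 'b::{finite,ab_group_add}"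
  assumes additive: "\<And>x y. f (x + y) = f x + f y" and "surj f"
  shows "CARD('a) = CARD('b) * card {x. f x = 0}"
proof -
  have diff: "f (x - y) = f x - f y" for x y
    by (metis additive diff_add_cancel eq_diff_eq)
  obtain s where s: "\<And>w. f (s w) = w"
    using \<open>surj f\<close> by (metis surjD)
  have "bij_betw (\<lambda>(w, k). s w + k) (UNIV \<times> {x. f x = 0}) UNIV"
  proof (rule bij_betwI[where g = "\<lambda>x. (f x, x - s (f x))"])
    show "(\<lambda>(w, k). s w + k) \<in> UNIV \<times> {x. f x = 0} \<rightarrow> UNIV"
      by simp
    show "(\<lambda>x. (f x, x - s (f x))) \<in> UNIV \<rightarrow> UNIV \<times> {x. f x = 0}"
      by (simp add: diff s)
  qed (auto simp: additive s)
  then show ?thesis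
    by (simp flip: card_cartesian_product add: bij_betw_same_card)
qed

lemma sum_card_filter_swap:
  assumes "finite A" "finite B"
  shows "(\<Sum>a\<in>A. card {b\<in>B. R a b}) = (\<Sum>b\<in>B. card {a\<in>A. R a b})"
  using sum.swap_restrict[OF assms, of "\<lambda>_ _. 1::nat" R] by simp

lemma card_distinct_pairs:
  assumes "finite S"
  shows "card {(x, y) \<in> S \<times> S. x \<noteq> y} = card S * (card S - 1)"
proof -
  have "{(x, y) \<in> S \<times> S. x \<noteq> y} = Sigma S (\<lambda>x. S - {x})"
    by auto
  then show ?thesis
    using assms by (simp add: card_Diff_singleton)
qed

lemma double_le_of_bool_eq_1_plus_pairs:
  fixes k :: nat
  assumes "k \<noteq> 2"
  shows "2 * k \<le> 2 * of_bool (k = 1) + k * (k - 1)"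
proof (cases "k \<le> 1")
  case True
  then show ?thesis
    by auto
next
  case False
  with assms have "2 \<le> k - 1"
    by simp
  then show ?thesis
    by (metis le_add2 le_trans mult.commute mult_le_mono2)
qed

lemma less_double_if_moment_identities:
  fixes N T M sA sB :: nat
  assumes A: "sA * N = (N - 1) * T" and B: "sB * N^2 = (N - 1) * (N - 2) * T"
    and I: "2 * sA \<le> 2 * M + sB" and "N > 2" and "T > 0"
  shows "T < 2 * M"
proof -
  define k where "k = N - 3"
  have N: "N = k + 3"
    using \<open>N > 2\<close> unfolding k_def by arith
  have "(k + 2) * (k + 5) * T + (k + 2) * (k + 1) * T = 2 * (k + 3) * ((k + 2) * T)"
    by (simp add: algebra_simps)
  also have "\<dots> = 2 * N * (sA * N)"
    unfolding A by (simp add: N)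
  also have "\<dots> = 2 * sA * N^2"
    by (simp add: power2_eq_square)
  also have "\<dots> \<le> 2 * M * N^2 + sB * N^2"
    using mult_le_mono1[OF I, of "N^2"] by (simp add: add_mult_distrib)
  also have "sB * N^2 = (k + 2) * (k + 1) * T"
    using B by (simp add: N)
  finally have "(k + 2) * (k + 5) * T \<le> 2 * M * N^2"
    by simp
  \<comment> \<open>\<open>(k + 2) * (k + 5) = (N - 1) * (N + 2) > N\<^sup>2\<close>\<close>
  with \<open>T > 0\<close> have "T * N^2 < 2 * M * N^2"
    unfolding N by (simp add: power2_eq_square algebra_simps)
  then show ?thesis
    by simp
qed

lemma surj_matrix_vector_mult:
  fixes x :: "'a::field ^ 'n"
  assumes "x \<noteq> 0"
  shows "surj (\<lambda>A::'a^'n^'m. A *v x)"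
proof -
  have "v \<in> range (\<lambda>A::'a^'n^'m. A *v x)" for v :: "'a^'m"
  proof -
    have "vec.independent {x}"
      using assms by simp
    then obtain g where "Vector_Spaces.linear (*s) (*s) g" "g x = v"
      using vec.linear_independent_extend[of "{x}" "\<lambda>_. v"] by blast
    then have "v = matrix g *v x"
      by (simp add: matrix_works)
    then show ?thesis
      by blast
  qed
  then show ?thesis
    by blast
qed

lemma surj_matrix_vector_mult_pair:
  fixes x y :: "'a::field ^ 'n"
  assumes "vec.independent {x, y}" "x \<noteq> y"
  shows "surj (\<lambda>A::'a^'n^'m. (A *v x, A *v y))"
proof -
  have "(v, w) \<in> range (\<lambda>A::'a^'n^'m. (A *v x, A *v y))" for v w :: "'a^'m"
  proof -
    obtain g where g: "Vector_Spaces.linear (*s) (*s) g"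
      and "\<forall>z\<in>{x, y}. g z = (if z = x then v else w)"
      using vec.linear_independent_extend[OF assms(1), of "\<lambda>z. if z = x then v else w"]
      by blast
    then have "g x = v" "g y = w"
      using assms(2) by auto
    then have "(v, w) = (matrix g *v x, matrix g *v y)"
      by (simp add: matrix_works g)
    then show ?thesis
      by blast
  qed
  then show ?thesis
    by auto
qed

lemma card_matrices_annihilating:
  fixes x :: "'a::{finite,field} ^ 'n"
  assumes "x \<noteq> 0"
  shows "card {A::'a^'n^'m. A *v x = 0} * CARD('a^'m) = CARD('a^'n^'m)"
proof -
  have "CARD('a^'n^'m) = CARD('a^'m) * card {A::'a^'n^'m. A *v x = 0}"
    by (rule card_UNIV_eq_mult_card_kernel)
      (simp_all add: matrix_vector_mult_add_rdistrib surj_matrix_vector_mult assms)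
  then show ?thesis
    by (simp only: mult.commute)
qed

lemma card_matrices_annihilating_pair:
  fixes x y :: "'a::{finite,field} ^ 'n"
  assumes "vec.independent {x, y}" "x \<noteq> y"
  shows "card {A::'a^'n^'m. A *v x = 0 \<and> A *v y = 0} * CARD('a^'m)^2 = CARD('a^'n^'m)"
proof -
  have "CARD('a^'n^'m) = CARD(('a^'m) \<times> ('a^'m)) * card {A::'a^'n^'m. (A *v x, A *v y) = 0}"
    by (rule card_UNIV_eq_mult_card_kernel)
      (simp_all add: matrix_vector_mult_add_rdistrib surj_matrix_vector_mult_pair assms)
  then show ?thesis
    by (simp only: zero_prod_def prod.inject card_prod power2_eq_square mult.commute)
qed

lemma subspace_null_space: "vec.subspace (null_space A)"
  unfolding null_space_def by (rule vec.subspace_kernel)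

lemma sum_card_nonzero_null_space:
  "(\<Sum>A::'a::{finite,field}^'n^'m\<in>UNIV. card (null_space A - {0})) * CARD('a^'m)
    = (CARD('a^'n) - 1) * CARD('a^'n^'m)"
proof -
  have "(\<Sum>A::'a^'n^'m\<in>UNIV. card (null_space A - {0}))
      = (\<Sum>A::'a^'n^'m\<in>UNIV. card {x \<in> UNIV - {0}. A *v x = 0})"
    by (intro sum.cong arg_cong[where f = card]) (auto simp: null_space_def)
  also have "\<dots> = (\<Sum>x \<in> UNIV - {0}. card {A::'a^'n^'m. A *v x = 0})"
    using sum_card_filter_swap[of "UNIV :: ('a^'n^'m) set" "UNIV - {0}" "\<lambda>A x. A *v x = 0"]
    by simp
  finally have "(\<Sum>A::'a^'n^'m\<in>UNIV. card (null_space A - {0})) * CARD('a^'m)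
      = (\<Sum>x \<in> UNIV - {0::'a^'n}. card {A::'a^'n^'m. A *v x = 0} * CARD('a^'m))"
    by (simp add: sum_distrib_right del: CARD_vec)
  also have "\<dots> = (\<Sum>x \<in> UNIV - {0::'a^'n}. CARD('a^'n^'m))"
    by (intro sum.cong) (simp_all add: card_matrices_annihilating del: CARD_vec)
  finally show ?thesis
    by (simp del: CARD_vec)
qed

lemma UNIV_bit: "(UNIV :: bit set) = {0, 1}"
  by auto

lemma card_UNIV_bit: "CARD(bit) = 2"
  unfolding UNIV_bit by simp

lemma bit_vec_add_self: "x + x = (0 :: bit^'n)"
  by (simp add: vec_eq_iff)

lemma bit_vec_span_singleton: "vec.span {x :: bit^'n} = {0, x}"
  unfolding vec.span_singleton UNIV_bit by simp

lemma bit_vec_independent_pair: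
  fixes x y :: "bit^'n"
  assumes "x \<noteq> 0" "y \<noteq> 0" "x \<noteq> y"
  shows "vec.independent {x, y}"
  using assms by (simp add: vec.independent_insert bit_vec_span_singleton)

lemma card_nonzero_subspace_ne_2:
  fixes V :: "(bit^'n) set"
  assumes "vec.subspace V"
  shows "card (V - {0}) \<noteq> 2"
proof
  assume "card (V - {0}) = 2"
  then obtain x y where xy: "V - {0} = {x, y}" "x \<noteq> y"
    by (auto simp: card_2_iff)
  then have "x + y \<in> V"
    using vec.subspace_add[OF assms] by blast
  moreover have "x + y \<noteq> 0"
    using xy(2) bit_vec_add_self by (metis add_right_cancel)
  moreover have "x + y \<noteq> x" "x + y \<noteq> y"
    using xy by auto
  ultimately show False
    using xy(1) by blast
qed

lemma nullity_eq_1_if_card_nonzero_null_space: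
  fixes A :: "bit^'n^'m"
  assumes "card (null_space A - {0}) = 1"
  shows "nullity A = 1"
proof -
  obtain x where x: "null_space A - {0} = {x}"
    using assms card_1_singletonE by blast
  moreover have "0 \<in> null_space A"
    by (simp add: null_space_def)
  ultimately have "null_space A = vec.span {x}"
    by (auto simp: bit_vec_span_singleton)
  moreover have "x \<noteq> 0"
    using x by auto
  ultimately show ?thesis
    by (simp add: nullity_def)
qed

lemma sum_card_distinct_pairs_nonzero_null_space:
  "(\<Sum>A::bit^'n^'m\<in>UNIV. card (null_space A - {0}) * (card (null_space A - {0}) - 1))
      * CARD(bit^'m)^2
    = (CARD(bit^'n) - 1) * (CARD(bit^'n) - 2) * CARD(bit^'n^'m)"
proof -
  define P where "P = {(x, y) \<in> (UNIV - {0}) \<times> (UNIV - {0::bit^'n}). x \<noteq> y}"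
  have "card (null_space A - {0}) * (card (null_space A - {0}) - 1)
      = card {p \<in> P. A *v fst p = 0 \<and> A *v snd p = 0}" for A :: "bit^'n^'m"
  proof -
    have "{p \<in> P. A *v fst p = 0 \<and> A *v snd p = 0}
        = {(x, y) \<in> (null_space A - {0}) \<times> (null_space A - {0}). x \<noteq> y}"
      by (auto simp: P_def null_space_def)
    then show ?thesis
      by (simp only: card_distinct_pairs[OF finite])
  qed
  then have "(\<Sum>A::bit^'n^'m\<in>UNIV. card (null_space A - {0}) * (card (null_space A - {0}) - 1))
      = (\<Sum>p\<in>P. card {A::bit^'n^'m. A *v fst p = 0 \<and> A *v snd p = 0})"
    using sum_card_filter_swap[of "UNIV :: (bit^'n^'m) set" P
        "\<lambda>A p. A *v fst p = 0 \<and> A *v snd p = 0"]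
    by (simp add: P_def)
  then have "(\<Sum>A::bit^'n^'m\<in>UNIV. card (null_space A - {0}) * (card (null_space A - {0}) - 1))
      * CARD(bit^'m)^2
      = (\<Sum>p\<in>P. card {A::bit^'n^'m. A *v fst p = 0 \<and> A *v snd p = 0} * CARD(bit^'m)^2)"
    by (simp add: sum_distrib_right del: CARD_vec)
  also have "\<dots> = (\<Sum>p\<in>P. CARD(bit^'n^'m))"
    by (intro sum.cong)
      (auto simp: P_def card_matrices_annihilating_pair bit_vec_independent_pair simp del: CARD_vec)
  also have "\<dots> = card P * CARD(bit^'n^'m)"
    by (simp del: CARD_vec)
  also have "card P = (CARD(bit^'n) - 1) * (CARD(bit^'n) - 2)"
    using card_distinct_pairs[of "UNIV - {0::bit^'n}"] by (simp add: P_def numeral_2_eq_2 del: CARD_vec)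
  finally show ?thesis .
qed

theorem mainTheorem13:
  assumes "CARD('n::finite) > 1"
  shows "2 * card {A :: bit ^ 'n ^ 'n. nullity A = 1} > CARD(bit ^ 'n ^ 'n)"
proof -
  let ?k = "\<lambda>A::bit^'n^'n. card (null_space A - {0})"
  have "2 * (\<Sum>A\<in>UNIV. ?k A) = (\<Sum>A\<in>UNIV. 2 * ?k A)"
    by (simp add: sum_distrib_left)
  also have "\<dots> \<le> (\<Sum>A\<in>UNIV. 2 * of_bool (?k A = 1) + ?k A * (?k A - 1))"
    by (intro sum_mono double_le_of_bool_eq_1_plus_pairs card_nonzero_subspace_ne_2
        subspace_null_space)
  also have "\<dots> = 2 * card {A. ?k A = 1} + (\<Sum>A\<in>UNIV. ?k A * (?k A - 1))"
    by (simp add: sum.distrib flip: sum_distrib_left)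
  finally have moments:
    "2 * (\<Sum>A\<in>UNIV. ?k A) \<le> 2 * card {A. ?k A = 1} + (\<Sum>A\<in>UNIV. ?k A * (?k A - 1))" .
  have "2 < CARD(bit^'n)"
    using assms power_strict_increasing_iff[of 2 1 "CARD('n)"] by (simp add: card_UNIV_bit)
  have "CARD(bit^'n^'n) < 2 * card {A. ?k A = 1}"
    by (rule less_double_if_moment_identities[OF sum_card_nonzero_null_space
          sum_card_distinct_pairs_nonzero_null_space moments])
      (use \<open>2 < CARD(bit^'n)\<close> in \<open>simp_all add: finite_UNIV_card_ge_0\<close>)
  also have "card {A. ?k A = 1} \<le> card {A :: bit ^ 'n ^ 'n. nullity A = 1}"
    by (rule card_mono[OF finite]) (blast intro: nullity_eq_1_if_card_nonzero_null_space)
  finally show ?thesis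
    by simp
qed

end
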